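(* Let $p,q$ be distinct sentential variables and let $\pi$ be any weighting function. For each of the following items, there exist a $\pi$-based selection function $\sigma$ and a $\Delta$ model $M$ with selection function $\sigma$ witnessing failure, namely: for items given as "$\varphi$ does not imply $\psi$", some world lies in $[\![\varphi]\!]_M\setminus[\![\psi]\!]_M$; for the item given as "$\psi$ is not valid", some world lies outside $[\![\psi]\!]_M$. (a) $\mathbb{P}p\wedge\mathbb{P}q$ does not imply $\mathbb{P}(p\wedge q)$; (b) $\mathbb{O}(p\vee q)$ does not imply $\mathbb{O}p\vee\mathbb{O}q$; (c) $p\rightarrow q$ does not imply $\mathbb{O}p\rightarrow\mathbb{O}q$; (d) $\mathbb{O}p$ does not imply $\mathbb{O}(p\wedge q)$; (e) $\mathbb{P}p$ does not imply $\mathbb{P}(p\wedge q)$; (f) $\mathbb{C}(p,q)\vee\mathbb{C}(q,p)$ is not valid; (g) $\mathbb{O}(p\vee q)$ does not imply $\mathbb{O}p$; (h) $\mathbb{O}p$ does not imply $p$; (i) $\mathbb{P}p$ does not imply $\mathbb{P}\mathbb{O}p$; (j) $(\neg q\succ\neg p)\wedge\mathbb{O}p$ does not imply $\mathbb{O}q$.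
   Context: Fix a set $\mathrm{PROPS}$ of sentential variables (containing $p,q$). The language $\mathcal{L}$: every $v\in\mathrm{PROPS}$ is a formula; if $\varphi,\psi$ are formulas so are $\neg\varphi$, $(\varphi\wedge\psi)$, $(\varphi\succeq\psi)$. Abbreviations: $\vee,\rightarrow,\leftrightarrow$ as usual; $\varphi\succ\psi := (\varphi\succeq\psi)\wedge\neg(\psi\succeq\varphi)$; $\top := (v_0\rightarrow v_0)$ for a fixed variable $v_0$. Deontic operators: $\mathbb{C}(\varphi,\psi) := (\varphi\wedge\psi)\succ(\varphi\wedge\neg\psi)$; $\mathbb{O}\psi := \mathbb{C}(\top,\psi)$; $\mathbb{P}\psi:=\neg\mathbb{O}\neg\psi$. A model is $M=(W,\sigma,u,t)$ with $W$ a nonempty set, $\sigma:W\times\{A\subseteq W:A\ne\emptyset\}\to W$ with $\sigma(w,A)\in A$, $u:W\to\mathbb{R}$, and $t:\mathrm{PROPS}\to\mathcal{P}(W)$. Semantics: $[\![v]\!]_M=t(v)$; $[\![\neg\theta]\!]_M=W\setminus[\![\theta]\!]_M$; $[\![\theta\wedge\psi]\!]_M=[\![\theta]\!]_M\cap[\![\psi]\!]_M$; $[\![\theta\succeq\psi]\!]_M=\emptyset$ if either $[\![\theta]\!]_M$ or $[\![\psi]\!]_M$ is empty, otherwise $\{w: u(\sigma(w,[\![\theta]\!]_M))\ge u(\sigma(w,[\![\psi]\!]_M))\}$. A $\Delta$ model is a model with $W=\mathcal{P}(\mathrm{PROPS})$, $t(v)=\{w: v\in w\}$ for all $v$, and $\sigma$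 $\Delta$-based: for all $w_0$ and nonempty $A$ there is no $w_1\in A$ with $w_0\triangle w_1\subsetneq w_0\triangle\sigma(w_0,A)$ ($\triangle$ = symmetric difference); $u$ is arbitrary. A weighting function is a map $\pi:\mathrm{PROPS}\to(0,\infty)$. For worlds $w_0,w_1$, $d_\pi(w_0,w_1):=\sum_{v\in w_0\triangle w_1}\pi(v)$. A selection function $\sigma$ (on $W=\mathcal{P}(\mathrm{PROPS})$) is $\pi$-based if for every $w\in W$ and nonempty $A\subseteq W$ there is no $w'\in A$ with $d_\pi(w,w')<d_\pi(w,\sigma(w,A))$. *)

theory Defs
  imports Complex_Main
begin

text \<open>Formulas of the language L over sentential variables of type 'v.
  PROPS is the (finite) universe of the type 'v.\<close>

datatype 'v form = Var 'v | Neg "'v form" | Conj "'v form" "'v form" | Pref "'v form" "'v form"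

definition Disj :: "'v form \<Rightarrow> 'v form \<Rightarrow> 'v form" where
  "Disj a b = Neg (Conj (Neg a) (Neg b))"

definition Imp :: "'v form \<Rightarrow> 'v form \<Rightarrow> 'v form" where
  "Imp a b = Neg (Conj a (Neg b))"

definition SPref :: "'v form \<Rightarrow> 'v form \<Rightarrow> 'v form" where
  "SPref a b = Conj (Pref a b) (Neg (Pref b a))"

definition Top :: "'v \<Rightarrow> 'v form" where
  "Top v0 = Imp (Var v0) (Var v0)"

definition Cond :: "'v \<Rightarrow> 'v form \<Rightarrow> 'v form \<Rightarrow> 'v form" where
  "Cond v0 a b = SPref (Conj a b) (Conj a (Neg b))"

definition Obl :: "'v \<Rightarrow> 'v form \<Rightarrow> 'v form" where
  "Obl v0 b = Cond v0 (Top v0) b"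

definition Perm :: "'v \<Rightarrow> 'v form \<Rightarrow> 'v form" where
  "Perm v0 b = Neg (Obl v0 (Neg b))"

definition is_model :: "'w set \<Rightarrow> ('w \<Rightarrow> 'w set \<Rightarrow> 'w) \<Rightarrow> ('w \<Rightarrow> real) \<Rightarrow> ('v \<Rightarrow> 'w set) \<Rightarrow> bool" where
  "is_model W \<sigma> u t \<longleftrightarrow> W \<noteq> {} \<and>
     (\<forall>w\<in>W. \<forall>A. A \<subseteq> W \<and> A \<noteq> {} \<longrightarrow> \<sigma> w A \<in> A) \<and> (\<forall>v. t v \<subseteq> W)"

fun sem :: "'w set \<Rightarrow> ('w \<Rightarrow> 'w set \<Rightarrow> 'w) \<Rightarrow> ('w \<Rightarrow> real) \<Rightarrow> ('v \<Rightarrow> 'w set) \<Rightarrow> 'v form \<Rightarrow> 'w set" where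
  "sem W \<sigma> u t (Var v) = t v"
| "sem W \<sigma> u t (Neg a) = W - sem W \<sigma> u t a"
| "sem W \<sigma> u t (Conj a b) = sem W \<sigma> u t a \<inter> sem W \<sigma> u t b"
| "sem W \<sigma> u t (Pref a b) =
     (let A = sem W \<sigma> u t a; B = sem W \<sigma> u t b in
      if A = {} \<or> B = {} then {} else {w \<in> W. u (\<sigma> w A) \<ge> u (\<sigma> w B)})"

text \<open>Delta models: W = P(PROPS) (here: all sets of type 'v set), t v = {w. v \<in> w}.\<close>

definition symdiff :: "'a set \<Rightarrow> 'a set \<Rightarrow> 'a set" where
  "symdiff a b = (a - b) \<union> (b - a)"

definition delta_t :: "'v \<Rightarrow> 'v set set" where
  "delta_t v = {w. v \<in> w}"

definition delta_based :: "('v set \<Rightarrow> 'v set set \<Rightarrow> 'v set) \<Rightarrow> bool" where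
  "delta_based \<sigma> \<longleftrightarrow> (\<forall>w0 A. A \<noteq> {} \<longrightarrow>
      \<not> (\<exists>w1\<in>A. symdiff w0 w1 \<subset> symdiff w0 (\<sigma> w0 A)))"

definition delta_model :: "('v set \<Rightarrow> 'v set set \<Rightarrow> 'v set) \<Rightarrow> ('v set \<Rightarrow> real) \<Rightarrow> bool" where
  "delta_model \<sigma> u \<longleftrightarrow> is_model UNIV \<sigma> u delta_t \<and> delta_based \<sigma>"

abbreviation dsem :: "('v set \<Rightarrow> 'v set set \<Rightarrow> 'v set) \<Rightarrow> ('v set \<Rightarrow> real) \<Rightarrow> 'v form \<Rightarrow> 'v set set" where
  "dsem \<sigma> u \<equiv> sem UNIV \<sigma> u delta_t"

definition weighting :: "('v \<Rightarrow> real) \<Rightarrow> bool" where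
  "weighting \<pi> \<longleftrightarrow> (\<forall>v. \<pi> v > 0)"

definition dist_pi :: "('v \<Rightarrow> real) \<Rightarrow> 'v set \<Rightarrow> 'v set \<Rightarrow> real" where
  "dist_pi \<pi> w0 w1 = (\<Sum>v\<in>symdiff w0 w1. \<pi> v)"

definition pi_based :: "('v \<Rightarrow> real) \<Rightarrow> ('v set \<Rightarrow> 'v set set \<Rightarrow> 'v set) \<Rightarrow> bool" where
  "pi_based \<pi> \<sigma> \<longleftrightarrow> (\<forall>w A. A \<noteq> {} \<longrightarrow>
      \<not> (\<exists>w'\<in>A. dist_pi \<pi> w w' < dist_pi \<pi> w (\<sigma> w A)))"

definition refutes_impl :: "('v::finite \<Rightarrow> real) \<Rightarrow> 'v form \<Rightarrow> 'v form \<Rightarrow> bool" where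
  "refutes_impl \<pi> \<phi> \<psi> \<longleftrightarrow> (\<exists>\<sigma> u. pi_based \<pi> \<sigma> \<and> delta_model \<sigma> u \<and>
      (\<exists>w. w \<in> dsem \<sigma> u \<phi> \<and> w \<notin> dsem \<sigma> u \<psi>))"

definition refutes_valid :: "('v::finite \<Rightarrow> real) \<Rightarrow> 'v form \<Rightarrow> bool" where
  "refutes_valid \<pi> \<psi> \<longleftrightarrow> (\<exists>\<sigma> u. pi_based \<pi> \<sigma> \<and> delta_model \<sigma> u \<and>
      (\<exists>w. w \<notin> dsem \<sigma> u \<psi>))"

end

theory Submission
  imports Defs
begin

text \<open>
  All countermodels use one selection function: from \<open>w\<close>, pick a \<open>d\<^sub>\<pi>\<close>-closest world of
  \<open>A\<close>. It is \<open>\<pi>\<close>-based by construction and \<open>\<Delta>\<close>-based because positive weights make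
  \<open>d\<^sub>\<pi>\<close> strictly monotone in the symmetric difference. For the same reason, whenever \<open>A\<close>
  contains a world whose symmetric difference with \<open>w\<close> is \<open>\<subseteq>\<close>-least, that world is
  selected whatever \<open>\<pi>\<close> is; each item then only needs a utility function that ranks these
  nearest worlds appropriately.
\<close>

definition nearest :: "('v::finite \<Rightarrow> real) \<Rightarrow> 'v set \<Rightarrow> 'v set set \<Rightarrow> 'v set" where
  "nearest \<pi> w = arg_min_on (dist_pi \<pi> w)"

lemma nearest_in: "A \<noteq> {} \<Longrightarrow> nearest \<pi> w A \<in> A"
  unfolding nearest_def by (rule arg_min_if_finite) simp_all

lemma not_dist_pi_less_nearest:
  "y \<in> A \<Longrightarrow> \<not> dist_pi \<pi> w y < dist_pi \<pi> w (nearest \<pi> w A)"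
  unfolding nearest_def using arg_min_if_finite(2)[of A "dist_pi \<pi> w"] by auto

lemma pi_based_nearest: "pi_based \<pi> (nearest \<pi>)"
  unfolding pi_based_def using not_dist_pi_less_nearest by blast

lemma dist_pi_strict_mono:
  fixes w a b :: "'v::finite set"
  assumes "weighting \<pi>" and "symdiff w a \<subset> symdiff w b"
  shows "dist_pi \<pi> w a < dist_pi \<pi> w b"
proof -
  obtain v where "v \<in> symdiff w b - symdiff w a" using assms(2) by blast
  with assms show ?thesis
    unfolding dist_pi_def weighting_def by (intro sum_strict_mono2) (auto intro: less_imp_le)
qed

lemma delta_based_nearest:
  assumes "weighting \<pi>"
  shows "delta_based (nearest \<pi>)"
  unfolding delta_based_def using dist_pi_strict_mono[OF assms] not_dist_pi_less_nearest by blast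

lemma delta_model_nearest: "weighting \<pi> \<Longrightarrow> delta_model (nearest \<pi>) u"
  unfolding delta_model_def is_model_def using nearest_in delta_based_nearest by blast

lemma nearest_eqI:
  assumes "weighting \<pi>" and "x \<in> A" and "\<And>y. y \<in> A \<Longrightarrow> symdiff w x \<subseteq> symdiff w y"
  shows "nearest \<pi> w A = x"
proof (rule ccontr)
  assume "nearest \<pi> w A \<noteq> x"
  with assms(2,3) have "symdiff w x \<subset> symdiff w (nearest \<pi> w A)"
    using nearest_in unfolding symdiff_def by blast
  with assms(1) have "dist_pi \<pi> w x < dist_pi \<pi> w (nearest \<pi> w A)"
    by (rule dist_pi_strict_mono)
  with assms(2) show False using not_dist_pi_less_nearest by blast
qed

lemma nearest_self: "weighting \<pi> \<Longrightarrow> w \<in> A \<Longrightarrow> nearest \<pi> w A = w"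
  by (rule nearest_eqI) (auto simp: symdiff_def)

lemma nearest_insert: "weighting \<pi> \<Longrightarrow> p \<notin> w \<Longrightarrow> nearest \<pi> w {y. p \<in> y} = insert p w"
  by (rule nearest_eqI) (auto simp: symdiff_def)

lemma nearest_remove: "weighting \<pi> \<Longrightarrow> p \<in> w \<Longrightarrow> nearest \<pi> w (UNIV - {y. p \<in> y}) = w - {p}"
  by (rule nearest_eqI) (auto simp: symdiff_def)

lemma dsem_Disj: "dsem \<sigma> u (Disj a b) = dsem \<sigma> u a \<union> dsem \<sigma> u b"
  by (auto simp: Disj_def)

lemma dsem_Imp: "dsem \<sigma> u (Imp a b) = (UNIV - dsem \<sigma> u a) \<union> dsem \<sigma> u b"
  by (auto simp: Imp_def)

lemma mem_dsem_SPref: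
  "w \<in> dsem \<sigma> u (SPref a b) \<longleftrightarrow> dsem \<sigma> u a \<noteq> {} \<and> dsem \<sigma> u b \<noteq> {}
     \<and> u (\<sigma> w (dsem \<sigma> u b)) < u (\<sigma> w (dsem \<sigma> u a))"
  by (auto simp: SPref_def Let_def)

lemma mem_dsem_Cond:
  "w \<in> dsem \<sigma> u (Cond v0 a b) \<longleftrightarrow>
     dsem \<sigma> u a \<inter> dsem \<sigma> u b \<noteq> {} \<and> dsem \<sigma> u a - dsem \<sigma> u b \<noteq> {}
     \<and> u (\<sigma> w (dsem \<sigma> u a - dsem \<sigma> u b)) < u (\<sigma> w (dsem \<sigma> u a \<inter> dsem \<sigma> u b))"
  unfolding Cond_def mem_dsem_SPref by (simp add: Diff_eq Compl_eq_Diff_UNIV [symmetric])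

lemma mem_dsem_Obl:
  "w \<in> dsem \<sigma> u (Obl v0 b) \<longleftrightarrow> dsem \<sigma> u b \<noteq> {} \<and> dsem \<sigma> u b \<noteq> UNIV
     \<and> u (\<sigma> w (UNIV - dsem \<sigma> u b)) < u (\<sigma> w (dsem \<sigma> u b))"
  unfolding Obl_def mem_dsem_Cond by (auto simp: Top_def Imp_def)

lemma mem_dsem_Perm:
  "w \<in> dsem \<sigma> u (Perm v0 b) \<longleftrightarrow> dsem \<sigma> u b = {} \<or> dsem \<sigma> u b = UNIV
     \<or> u (\<sigma> w (UNIV - dsem \<sigma> u b)) \<le> u (\<sigma> w (dsem \<sigma> u b))"
  unfolding Perm_def sem.simps(2) Diff_iff mem_dsem_Obl by (auto simp: double_diff)

lemma refutes_implI:
  assumes "weighting \<pi>" and "w \<in> dsem (nearest \<pi>) u \<phi>" and "w \<notin> dsem (nearest \<pi>) u \<psi>"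
  shows "refutes_impl \<pi> \<phi> \<psi>"
  unfolding refutes_impl_def using pi_based_nearest delta_model_nearest[OF assms(1)] assms(2,3) by blast

lemma refutes_validI:
  assumes "weighting \<pi>" and "w \<notin> dsem (nearest \<pi>) u \<psi>"
  shows "refutes_valid \<pi> \<psi>"
  unfolding refutes_valid_def using pi_based_nearest delta_model_nearest[OF assms(1)] assms(2) by auto

lemma refutes_Perm_Conj:
  fixes p q v0 :: "'v::finite"
  assumes "p \<noteq> q" and \<pi>: "weighting \<pi>"
  shows "refutes_impl \<pi> (Conj (Perm v0 (Var p)) (Perm v0 (Var q))) (Perm v0 (Conj (Var p) (Var q)))"
    and "refutes_impl \<pi> (Perm v0 (Var p)) (Perm v0 (Conj (Var p) (Var q)))"
proof -
  define u :: "'v set \<Rightarrow> real" where "u w = (if p \<in> w \<and> q \<in> w then -1 else 0)" for w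
  let ?M = "dsem (nearest \<pi>) u"
  have Perm_p: "{} \<in> ?M (Perm v0 (Var p))" and Perm_q: "{} \<in> ?M (Perm v0 (Var q))"
    using assms by (auto simp: mem_dsem_Perm delta_t_def nearest_self nearest_insert u_def)
  have "?M (Conj (Var p) (Var q)) = {w. p \<in> w \<and> q \<in> w}"
    by (auto simp: delta_t_def)
  moreover have "nearest \<pi> {} {w. p \<in> w \<and> q \<in> w} = {p, q}"
    by (rule nearest_eqI[OF \<pi>]) (auto simp: symdiff_def)
  ultimately have "{} \<notin> ?M (Perm v0 (Conj (Var p) (Var q)))"
    using \<pi> by (auto simp: mem_dsem_Perm nearest_self u_def)
  with Perm_p Perm_q \<pi> show "refutes_impl \<pi> (Conj (Perm v0 (Var p)) (Perm v0 (Var q))) (Perm v0 (Conj (Var p) (Var q)))"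
    and "refutes_impl \<pi> (Perm v0 (Var p)) (Perm v0 (Conj (Var p) (Var q)))"
    by (auto intro: refutes_implI)
qed

lemma refutes_Obl_Disj:
  fixes p q v0 :: "'v::finite"
  assumes "p \<noteq> q" and \<pi>: "weighting \<pi>"
  shows "refutes_impl \<pi> (Obl v0 (Disj (Var p) (Var q))) (Disj (Obl v0 (Var p)) (Obl v0 (Var q)))"
    and "refutes_impl \<pi> (Obl v0 (Disj (Var p) (Var q))) (Obl v0 (Var p))"
proof -
  define u :: "'v set \<Rightarrow> real" where "u w = (if p \<notin> w \<and> q \<notin> w then -1 else 0)" for w
  let ?M = "dsem (nearest \<pi>) u"
  have "?M (Disj (Var p) (Var q)) = {w. p \<in> w \<or> q \<in> w}"
    by (auto simp: dsem_Disj delta_t_def)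
  moreover have "nearest \<pi> {p, q} (UNIV - {w. p \<in> w \<or> q \<in> w}) = {}"
    by (rule nearest_eqI[OF \<pi>]) (auto simp: symdiff_def)
  ultimately have Obl_pq: "{p, q} \<in> ?M (Obl v0 (Disj (Var p) (Var q)))"
    using \<pi> by (auto simp: mem_dsem_Obl nearest_self u_def)
  have "nearest \<pi> {p, q} (UNIV - {w. p \<in> w}) = {q}" and "nearest \<pi> {p, q} (UNIV - {w. q \<in> w}) = {p}"
    using assms nearest_remove[OF \<pi>, of p "{p, q}"] nearest_remove[OF \<pi>, of q "{p, q}"] by auto
  then have Obl_p: "{p, q} \<notin> ?M (Obl v0 (Var p))" and "{p, q} \<notin> ?M (Obl v0 (Var q))"
    using assms by (auto simp: mem_dsem_Obl delta_t_def nearest_self u_def)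
  with Obl_pq \<pi> show "refutes_impl \<pi> (Obl v0 (Disj (Var p) (Var q))) (Disj (Obl v0 (Var p)) (Obl v0 (Var q)))"
    and "refutes_impl \<pi> (Obl v0 (Disj (Var p) (Var q))) (Obl v0 (Var p))"
    by (auto simp: dsem_Disj intro: refutes_implI)
qed

lemma refutes_Obl_consequences:
  fixes p q v0 :: "'v::finite"
  assumes "p \<noteq> q" and \<pi>: "weighting \<pi>"
  shows "refutes_impl \<pi> (Imp (Var p) (Var q)) (Imp (Obl v0 (Var p)) (Obl v0 (Var q)))"
    and "refutes_impl \<pi> (Obl v0 (Var p)) (Obl v0 (Conj (Var p) (Var q)))"
    and "refutes_impl \<pi> (Obl v0 (Var p)) (Var p)"
    and "refutes_impl \<pi> (Conj (SPref (Neg (Var q)) (Neg (Var p))) (Obl v0 (Var p))) (Obl v0 (Var q))"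
proof -
  define u :: "'v set \<Rightarrow> real" where "u w = (if p \<in> w \<and> q \<notin> w then 1 else 0)" for w
  let ?M = "dsem (nearest \<pi>) u"
  have Obl_p: "{} \<in> ?M (Obl v0 (Var p))" and "{} \<notin> ?M (Obl v0 (Var q))"
    using assms by (auto simp: mem_dsem_Obl delta_t_def nearest_self nearest_insert u_def)
  then have Imp: "{} \<notin> ?M (Imp (Obl v0 (Var p)) (Obl v0 (Var q)))"
    by (simp add: dsem_Imp)
  have "?M (Conj (Var p) (Var q)) = {w. p \<in> w \<and> q \<in> w}"
    by (auto simp: delta_t_def)
  moreover have "nearest \<pi> {} {w. p \<in> w \<and> q \<in> w} = {p, q}"
    by (rule nearest_eqI[OF \<pi>]) (auto simp: symdiff_def)
  ultimately have Obl_pq: "{} \<notin> ?M (Obl v0 (Conj (Var p) (Var q)))"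
    using \<pi> by (auto simp: mem_dsem_Obl nearest_self u_def)
  have "nearest \<pi> {p} (UNIV - {w. p \<in> w}) = {}" and "nearest \<pi> {p} {w. q \<in> w} = {p, q}"
    using assms nearest_remove[OF \<pi>, of p "{p}"] nearest_insert[OF \<pi>, of q "{p}"] by auto
  then have SPref_Obl_p: "{p} \<in> ?M (Conj (SPref (Neg (Var q)) (Neg (Var p))) (Obl v0 (Var p)))"
    using assms by (auto simp: mem_dsem_SPref mem_dsem_Obl delta_t_def nearest_self u_def)
  have Obl_q: "{p} \<notin> ?M (Obl v0 (Var q))"
    using assms by (auto simp: mem_dsem_Obl delta_t_def nearest_self u_def)
  have "{} \<in> ?M (Imp (Var p) (Var q))" and "{} \<notin> ?M (Var p)"
    by (auto simp: dsem_Imp delta_t_def)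
  with Obl_p Imp Obl_pq SPref_Obl_p Obl_q \<pi>
  show "refutes_impl \<pi> (Imp (Var p) (Var q)) (Imp (Obl v0 (Var p)) (Obl v0 (Var q)))"
    and "refutes_impl \<pi> (Obl v0 (Var p)) (Obl v0 (Conj (Var p) (Var q)))"
    and "refutes_impl \<pi> (Obl v0 (Var p)) (Var p)"
    and "refutes_impl \<pi> (Conj (SPref (Neg (Var q)) (Neg (Var p))) (Obl v0 (Var p))) (Obl v0 (Var q))"
    by (blast intro: refutes_implI)+
qed

lemma refutes_Cond_connected:
  fixes p q v0 :: "'v::finite"
  assumes "weighting \<pi>"
  shows "refutes_valid \<pi> (Disj (Cond v0 (Var p) (Var q)) (Cond v0 (Var q) (Var p)))"
  by (rule refutes_validI[OF assms, where w = "{}" and u = "\<lambda>_. 0"])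
    (simp add: dsem_Disj mem_dsem_Cond)

lemma refutes_Perm_Obl:
  fixes p q v0 :: "'v::finite"
  assumes "p \<noteq> q" and \<pi>: "weighting \<pi>"
  shows "refutes_impl \<pi> (Perm v0 (Var p)) (Perm v0 (Obl v0 (Var p)))"
proof -
  define u :: "'v set \<Rightarrow> real" where "u w = (if p \<notin> w \<and> q \<in> w then -1 else 0)" for w
  let ?M = "dsem (nearest \<pi>) u"
  have "?M (Obl v0 (Var p)) = {w. q \<in> w}"
  proof (intro set_eqI)
    fix w :: "'v set"
    show "w \<in> ?M (Obl v0 (Var p)) \<longleftrightarrow> w \<in> {w. q \<in> w}"
      using assms
      by (cases "p \<in> w") (auto simp: mem_dsem_Obl delta_t_def nearest_self nearest_insert
          nearest_remove u_def)
  qed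
  then have Perm_Obl_p: "{} \<notin> ?M (Perm v0 (Obl v0 (Var p)))"
    using assms by (auto simp: mem_dsem_Perm nearest_self nearest_insert u_def)
  have "{} \<in> ?M (Perm v0 (Var p))"
    using assms by (auto simp: mem_dsem_Perm delta_t_def nearest_self nearest_insert u_def)
  then show ?thesis
    using Perm_Obl_p by (rule refutes_implI[OF \<pi>])
qed

theorem proposition5p6:
  fixes p q v0 :: "'v::finite" and \<pi> :: "'v \<Rightarrow> real"
  assumes "p \<noteq> q" and "weighting \<pi>"
  shows "refutes_impl \<pi> (Conj (Perm v0 (Var p)) (Perm v0 (Var q))) (Perm v0 (Conj (Var p) (Var q)))
    \<and> refutes_impl \<pi> (Obl v0 (Disj (Var p) (Var q))) (Disj (Obl v0 (Var p)) (Obl v0 (Var q)))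
    \<and> refutes_impl \<pi> (Imp (Var p) (Var q)) (Imp (Obl v0 (Var p)) (Obl v0 (Var q)))
    \<and> refutes_impl \<pi> (Obl v0 (Var p)) (Obl v0 (Conj (Var p) (Var q)))
    \<and> refutes_impl \<pi> (Perm v0 (Var p)) (Perm v0 (Conj (Var p) (Var q)))
    \<and> refutes_valid \<pi> (Disj (Cond v0 (Var p) (Var q)) (Cond v0 (Var q) (Var p)))
    \<and> refutes_impl \<pi> (Obl v0 (Disj (Var p) (Var q))) (Obl v0 (Var p))
    \<and> refutes_impl \<pi> (Obl v0 (Var p)) (Var p)
    \<and> refutes_impl \<pi> (Perm v0 (Var p)) (Perm v0 (Obl v0 (Var p)))
    \<and> refutes_impl \<pi> (Conj (SPref (Neg (Var q)) (Neg (Var p))) (Obl v0 (Var p))) (Obl v0 (Var q))"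
  using refutes_Perm_Conj[OF assms] refutes_Obl_Disj[OF assms] refutes_Obl_consequences[OF assms]
    refutes_Cond_connected[OF assms(2)] refutes_Perm_Obl[OF assms]
  by blast

end
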